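(* For every command $c$ of the While-language and every store $\sigma$: $\big(\forall\sigma'.\ (c,\sigma,\Downarrow)\Rightarrow^{co}_G\sigma',\Uparrow\big)$ if and only if $\big(\exists\sigma'.\ (c,\sigma,\Downarrow)\Rightarrow^{co}_G\sigma',\Uparrow\big)$.
   Context: While-language syntax: variables $x$ range over a countably infinite set $\mathit{Var}$; $n$ ranges over natural numbers; values are $v ::= \mathsf{null}\mid n$ ($\mathsf{null}$ distinct from every natural number); expressions are $e ::= v\mid x\mid e_1\oplus e_2$ with $\oplus\in\{+,-,*\}$, where $\oplus(n_1,n_2)$ is the result of the operation on naturals; commands are $c ::= \mathsf{skip}\mid\mathsf{alloc}\ x\mid x:=e\mid c_1;c_2\mid \mathsf{if}\ e\ c_1\ c_2\mid\mathsf{while}\ e\ c$. A store $\sigma$ is a finite partial map from $\mathit{Var}$ to values, with domain $\mathrm{dom}(\sigma)$, lookup $\sigma(x)$, update $\sigma[x\mapsto v]$. Flag-based big-step semantics: status flags $\delta ::= \Downarrow\mid\Uparrow$ (convergent / divergent). Expression evaluation $(e,\sigma,\delta)\Rightarrow_{GE}v,\delta'$ is the least relation with: $(v,\sigma,\Downarrow)\Rightarrow_{GE}v,\Downarrow$; $(x,\sigma,\Downarrow)\Rightarrow_{GE}\sigma(x),\Downarrow$ if $x\in\mathrm{dom}(\sigma)$; if $(e_1,\sigma,\Downarrow)\Rightarrow_{GE}n_1,\delta$ and $(e_2,\sigma,\delta)\Rightarrow_{GE}n_2,\delta'$ ($n_1,n_2$ naturals) then $(e_1\oplus e_2,\sigma,\Downarrow)\Rightarrow_{GE}\oplus(n_1,n_2),\delta'$;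 and $(e,\sigma,\Uparrow)\Rightarrow_{GE}v,\Uparrow$ for every value $v$. The command rules for judgments $(c,\sigma,\delta)\Rightarrow_G\sigma',\delta'$ are: $(\mathsf{skip},\sigma,\Downarrow)\Rightarrow_G\sigma,\Downarrow$; $(\mathsf{alloc}\ x,\sigma,\Downarrow)\Rightarrow_G\sigma[x\mapsto\mathsf{null}],\Downarrow$ if $x\notin\mathrm{dom}(\sigma)$; $(x:=e,\sigma,\Downarrow)\Rightarrow_G\sigma[x\mapsto v],\delta$ if $x\in\mathrm{dom}(\sigma)$ and $(e,\sigma,\Downarrow)\Rightarrow_{GE}v,\delta$; $(c_1;c_2,\sigma,\Downarrow)\Rightarrow_G\sigma'',\delta'$ if $(c_1,\sigma,\Downarrow)\Rightarrow_G\sigma',\delta$ and $(c_2,\sigma',\delta)\Rightarrow_G\sigma'',\delta'$; $(\mathsf{if}\ e\ c_1\ c_2,\sigma,\Downarrow)\Rightarrow_G\sigma',\delta'$ if $v\ne0$, $(e,\sigma,\Downarrow)\Rightarrow_{GE}v,\delta$ and $(c_1,\sigma,\delta)\Rightarrow_G\sigma',\delta'$; $(\mathsf{if}\ e\ c_1\ c_2,\sigma,\Downarrow)\Rightarrow_G\sigma',\delta'$ if $(e,\sigma,\Downarrow)\Rightarrow_{GE}0,\delta$ and $(c_2,\sigma,\delta)\Rightarrow_G\sigma',\delta'$; $(\mathsf{while}\ e\ c,\sigma,\Downarrow)\Rightarrow_G\sigma'',\delta''$ if $(e,\sigma,\Downarrow)\Rightarrow_{GE}v,\delta$, $v\ne0$,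 $(c,\sigma,\delta)\Rightarrow_G\sigma',\delta'$ and $(\mathsf{while}\ e\ c,\sigma',\delta')\Rightarrow_G\sigma'',\delta''$; $(\mathsf{while}\ e\ c,\sigma,\Downarrow)\Rightarrow_G\sigma,\delta$ if $(e,\sigma,\Downarrow)\Rightarrow_{GE}0,\delta$; $(c,\sigma,\Uparrow)\Rightarrow_G\sigma',\Uparrow$ for every store $\sigma'$. $\Rightarrow^{co}_G$ denotes the coinductive interpretation of these command rules: the greatest relation such that every element is the conclusion of a rule instance whose command premises lie in it. *)

theory Defs
  imports Main "HOL-Library.Finite_Map"
begin

type_synonym var = nat

datatype val = Null | Nat nat

datatype binop = Plus | Minus | Times

datatype expr = Val val | Var var | BinOp binop expr expr

datatype cmd = Skip | Alloc var | Assign var expr | Seq cmd cmd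
  | If expr cmd cmd | While expr cmd

type_synonym store = "(var, val) fmap"

datatype flag = Conv | Div

(* result of the operation on naturals (subtraction on naturals is truncated) *)
fun apply_op :: "binop \<Rightarrow> nat \<Rightarrow> nat \<Rightarrow> nat" where
  "apply_op Plus a b = a + b"
| "apply_op Minus a b = a - b"
| "apply_op Times a b = a * b"

inductive evalGE :: "expr \<Rightarrow> store \<Rightarrow> flag \<Rightarrow> val \<Rightarrow> flag \<Rightarrow> bool" where
  GE_val: "evalGE (Val v) \<sigma> Conv v Conv"
| GE_var: "fmlookup \<sigma> x = Some v \<Longrightarrow> evalGE (Var x) \<sigma> Conv v Conv"
| GE_op: "evalGE e1 \<sigma> Conv (Nat n1) \<delta> \<Longrightarrow> evalGE e2 \<sigma> \<delta> (Nat n2) \<delta>' \<Longrightarrow>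
          evalGE (BinOp op e1 e2) \<sigma> Conv (Nat (apply_op op n1 n2)) \<delta>'"
| GE_div: "evalGE e \<sigma> Div v Div"

coinductive coG :: "cmd \<Rightarrow> store \<Rightarrow> flag \<Rightarrow> store \<Rightarrow> flag \<Rightarrow> bool" where
  G_skip: "coG Skip \<sigma> Conv \<sigma> Conv"
| G_alloc: "x |\<notin>| fmdom \<sigma> \<Longrightarrow> coG (Alloc x) \<sigma> Conv (fmupd x Null \<sigma>) Conv"
| G_assign: "x |\<in>| fmdom \<sigma> \<Longrightarrow> evalGE e \<sigma> Conv v \<delta> \<Longrightarrow>
             coG (Assign x e) \<sigma> Conv (fmupd x v \<sigma>) \<delta>"
| G_seq: "coG c1 \<sigma> Conv \<sigma>' \<delta> \<Longrightarrow> coG c2 \<sigma>' \<delta> \<sigma>'' \<delta>' \<Longrightarrow>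
          coG (Seq c1 c2) \<sigma> Conv \<sigma>'' \<delta>'"
| G_if_true: "v \<noteq> Nat 0 \<Longrightarrow> evalGE e \<sigma> Conv v \<delta> \<Longrightarrow> coG c1 \<sigma> \<delta> \<sigma>' \<delta>' \<Longrightarrow>
              coG (If e c1 c2) \<sigma> Conv \<sigma>' \<delta>'"
| G_if_false: "evalGE e \<sigma> Conv (Nat 0) \<delta> \<Longrightarrow> coG c2 \<sigma> \<delta> \<sigma>' \<delta>' \<Longrightarrow>
              coG (If e c1 c2) \<sigma> Conv \<sigma>' \<delta>'"
| G_while_true: "evalGE e \<sigma> Conv v \<delta> \<Longrightarrow> v \<noteq> Nat 0 \<Longrightarrow> coG c \<sigma> \<delta> \<sigma>' \<delta>' \<Longrightarrow>
                 coG (While e c) \<sigma>' \<delta>' \<sigma>'' \<delta>'' \<Longrightarrow> coG (While e c) \<sigma> Conv \<sigma>'' \<delta>''"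
| G_while_false: "evalGE e \<sigma> Conv (Nat 0) \<delta> \<Longrightarrow> coG (While e c) \<sigma> Conv \<sigma> \<delta>"
| G_div: "coG c \<sigma> Div \<sigma>' Div"

end

theory Submission
  imports Defs
begin

text \<open>Expression evaluation started in the convergent state never diverges, so divergence of a
  command can only come from a divergent sub-command. Since a divergent flag makes every store
  derivable, the final store of a divergent derivation can be replaced by any other store; this
  is a coinduction whose invariant is ``the command diverges from \<open>\<sigma>\<close> to some store''.\<close>

lemma evalGE_Conv_imp_Conv: "evalGE e \<sigma> Conv v \<delta> \<Longrightarrow> \<delta> = Conv"
  by (induction e \<sigma> "Conv" v \<delta> rule: evalGE.induct) auto

lemma coG_Div_any_store:
  assumes "coG c \<sigma> \<delta> \<sigma>' Div"
  shows "coG c \<sigma> \<delta> \<tau> Div"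
  using assms
proof (coinduction arbitrary: c \<sigma> \<delta> \<sigma>' \<tau> rule: coG.coinduct)
  case (coG c \<sigma> \<delta> \<sigma>' \<tau>)
  from coG show ?case
  proof cases
    case (G_assign x e v)
    then show ?thesis by (auto dest: evalGE_Conv_imp_Conv)
  next
    case (G_seq c1 \<sigma>1 \<delta>1 c2)
    then show ?thesis by (cases \<delta>1) (auto intro: coG.G_div)
  next
    case (G_if_true v e \<delta>1 c1 c2)
    then show ?thesis by (auto dest: evalGE_Conv_imp_Conv)
  next
    case (G_if_false e \<delta>1 c2 c1)
    then show ?thesis by (auto dest: evalGE_Conv_imp_Conv)
  next
    case (G_while_true e v \<delta>1 b \<sigma>1 \<delta>2)
    then have "\<delta>1 = Conv" by (blast dest: evalGE_Conv_imp_Conv)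
    with G_while_true show ?thesis by (cases \<delta>2) (fastforce intro: coG.G_div)+
  next
    case (G_while_false e b)
    then show ?thesis by (auto dest: evalGE_Conv_imp_Conv)
  qed auto
qed

theorem lemma21:
  fixes c :: cmd and \<sigma> :: store
  shows "(\<forall>\<sigma>'. coG c \<sigma> Conv \<sigma>' Div) \<longleftrightarrow> (\<exists>\<sigma>'. coG c \<sigma> Conv \<sigma>' Div)"
  using coG_Div_any_store by blast

end
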